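(* Let $n\ge 1$ be an integer and let $x$ be an integer with $0\le x\le n-1$ such that there exists a positive divisor $h$ of $x$ with $(2x+1)\mid(2n-2h+1)$. Then $F_{n,n-x}=1$.
   Context: Define maps $G,S:\mathbb Z^2\to\mathbb Z^2$ by $G(x,y)=(x+y,y)$ and $S(x,y)=(3x-2y+1,\,2x-y+1)$. Define the array $(F_{n,k})_{n,k\ge 0}$ by $F_{0,0}=1$ and, for $(n,k)\neq(0,0)$, $F_{n,k}$ is the number of finite words $w=w_1w_2\cdots w_m$ ($m\ge 0$) over the alphabet $\{G,S\}$ with $w_1\circ w_2\circ\cdots\circ w_m(1,1)=(n,k)$ (the empty word acts as the identity). Equivalently: start with all entries $0$, set $F_{0,0}=1$ and $F_{1,1}=1$, and thereafter, whenever an entry $F_{n,k}$ with $n\ge 1$ changes its value, increase $F_{n+k,k}$ and $F_{3n+1-2k,\,2n+1-k}$ by $1$. Every positive integer divides $0$. *)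

theory Defs
  imports Main
begin

datatype gs = Gm | Sm

fun gs_app :: "gs \<Rightarrow> int \<times> int \<Rightarrow> int \<times> int" where
  "gs_app Gm (x, y) = (x + y, y)"
| "gs_app Sm (x, y) = (3*x - 2*y + 1, 2*x - y + 1)"

definition act :: "gs list \<Rightarrow> int \<times> int \<Rightarrow> int \<times> int" where
  "act w p = foldr gs_app w p"

definition F :: "nat \<Rightarrow> nat \<Rightarrow> nat" where
  "F n k = (if n = 0 \<and> k = 0 then 1
            else card {w. act w (1, 1) = (int n, int k)})"

end

theory Submission
  imports Defs
begin

text \<open>
  Both maps send the cone \<open>1 \<le> y \<le> x\<close> into itself, and on it they are injective with
  disjoint images (\<open>G\<close>-images satisfy \<open>x \<ge> 2y\<close>, \<open>S\<close>-images \<open>x < 2y\<close>), so distinct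
  words send \<open>(1, 1)\<close> to distinct points and every \<open>F\<^sub>n\<^sub>,\<^sub>k\<close> is at most \<open>1\<close>.
  Writing \<open>x = k h\<close> and \<open>n = x + h + (2x + 1) m\<close>, which the divisibility hypothesis
  allows, the word \<open>S\<^sup>m G\<^sup>k S\<^sup>h\<^sup>-\<^sup>1\<close> sends \<open>(1, 1)\<close> to \<open>(h, h)\<close>, then to \<open>((k + 1) h, h)\<close>,
  and finally to \<open>(n, n - x)\<close>, since \<open>S\<close> adds \<open>2(x - y) + 1\<close> to both coordinates.
\<close>

lemma act_Nil [simp]: "act [] p = p"
  by (simp add: act_def)

lemma act_Cons [simp]: "act (a # w) p = gs_app a (act w p)"
  by (simp add: act_def)

lemma act_append: "act (u @ v) p = act u (act v p)"
  by (simp add: act_def)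

lemma gs_app_maps_cone:
  assumes "1 \<le> y" "y \<le> x"
  shows "1 \<le> snd (gs_app a (x, y)) \<and> snd (gs_app a (x, y)) \<le> fst (gs_app a (x, y))
    \<and> 2 \<le> fst (gs_app a (x, y))"
  using assms by (cases a) auto

lemma act_base_in_cone:
  "1 \<le> snd (act w (1, 1)) \<and> snd (act w (1, 1)) \<le> fst (act w (1, 1))"
proof (induction w)
  case (Cons a w)
  then show ?case
    using gs_app_maps_cone[of "snd (act w (1, 1))" "fst (act w (1, 1))" a] by simp
qed simp

lemma act_base_eq_base_iff: "act w (1, 1) = (1, 1) \<longleftrightarrow> w = []"
proof (cases w)
  case (Cons a v)
  then show ?thesis
    using act_base_in_cone[of v] gs_app_maps_cone[of "snd (act v (1, 1))" "fst (act v (1, 1))" a]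
    by (cases "gs_app a (act v (1, 1))") auto
qed simp

lemma gs_app_inj_on_cone:
  assumes "1 \<le> snd p" "snd p \<le> fst p" "1 \<le> snd q" "snd q \<le> fst q"
    and "gs_app a p = gs_app b q"
  shows "a = b \<and> p = q"
  using assms by (cases p; cases q; cases a; cases b) auto

lemma inj_act_base: "inj (\<lambda>w. act w (1, 1))"
proof (rule injI)
  show "w = w'" if "act w (1, 1) = act w' (1, 1)" for w w'
    using that
  proof (induction w arbitrary: w')
    case Nil
    then show ?case
      using act_base_eq_base_iff[of w'] by simp
  next
    case (Cons a w)
    show ?case
    proof (cases w')
      case Nil
      with Cons.prems show ?thesis
        using act_base_eq_base_iff[of "a # w"] by simp
    next
      case (Cons b v)
      with Cons.prems have "gs_app a (act w (1, 1)) = gs_app b (act v (1, 1))"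
        by simp
      then have "a = b \<and> act w (1, 1) = act v (1, 1)"
        using gs_app_inj_on_cone act_base_in_cone[of w] act_base_in_cone[of v] by blast
      with Cons.IH Cons show ?thesis by auto
    qed
  qed
qed

lemma F_eq_1_if_reachable:
  assumes "act w (1, 1) = (int n, int k)"
  shows "F n k = 1"
proof -
  have "{w'. act w' (1, 1) = (int n, int k)} = {w}"
    using assms injD[OF inj_act_base] by fastforce
  then show ?thesis
    unfolding F_def by simp
qed

lemma act_replicate_Sm:
  "act (replicate m Sm) (X, Y) = (X + int m * (2 * (X - Y) + 1), Y + int m * (2 * (X - Y) + 1))"
  by (induction m) (auto simp: algebra_simps)

lemma act_replicate_Gm: "act (replicate k Gm) (c, c) = ((1 + int k) * c, c)"
  by (induction k) (auto simp: algebra_simps)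

lemma act_SGS_base:
  assumes "h > 0"
  shows "act (replicate m Sm @ replicate k Gm @ replicate (h - 1) Sm) (1, 1)
    = (int (k * h + h + (2 * k * h + 1) * m), int (h + (2 * k * h + 1) * m))"
proof -
  have "act (replicate (h - 1) Sm) (1, 1) = (int h, int h)"
    using assms act_replicate_Sm[of "h - 1" 1 1] by simp
  then show ?thesis
    by (simp add: act_append act_replicate_Gm act_replicate_Sm algebra_simps)
qed

lemma odd_dvd_double_imp_dvd:
  fixes d t :: int
  assumes "odd d" "d dvd 2 * t"
  shows "d dvd t"
  using assms by (metis coprime_dvd_mult_right_iff coprime_right_2_iff_odd)

lemma target_decomposition:
  fixes n x h :: nat
  assumes "x < n" "h \<le> x" "(2 * int x + 1) dvd (2 * int n - 2 * int h + 1)"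
  obtains m where "n = x + h + (2 * x + 1) * m"
proof -
  have "2 * int n - 2 * int h + 1 = 2 * (int n - int x - int h) + (2 * int x + 1)"
    by simp
  with assms(3) have "(2 * int x + 1) dvd 2 * (int n - int x - int h)"
    by (metis dvd_add_left_iff dvd_refl)
  then have "(2 * int x + 1) dvd int n - int x - int h"
    by (rule odd_dvd_double_imp_dvd[rotated]) simp
  then obtain q where q: "int n - int x - int h = (2 * int x + 1) * q" ..
  have "(2 * int x + 1) * (-1) < (2 * int x + 1) * q"
    using assms(1,2) unfolding q[symmetric] by simp
  then have "q \<ge> 0"
    by (simp only: mult_less_cancel_left) linarith
  then obtain m where "q = int m"
    using nonneg_int_cases by blast
  with q have "int n = int (x + h + (2 * x + 1) * m)"
    by (simp add: algebra_simps)
  then have "n = x + h + (2 * x + 1) * m"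
    by (rule of_nat_eq_iff[THEN iffD1])
  then show thesis ..
qed

theorem theorem9:
  fixes n x :: nat
  assumes "n \<ge> 1" and "x \<le> n - 1"
    and "\<exists>h::nat. h > 0 \<and> h dvd x \<and> (2 * int x + 1) dvd (2 * int n - 2 * int h + 1)"
  shows "F n (n - x) = 1"
proof -
  have "x < n"
    using assms(1,2) by linarith
  obtain h k m where hkm: "h > 0" "x = k * h" "n = x + h + (2 * x + 1) * m"
  proof (cases "x = 0")
    case True
    with \<open>x < n\<close> show thesis
      using that[of 1 0 "n - 1"] by simp
  next
    case False
    from assms(3) obtain h where h: "h > 0" "h dvd x"
      "(2 * int x + 1) dvd (2 * int n - 2 * int h + 1)" by blast
    with False have "h \<le> x"
      by (simp add: dvd_imp_le)
    with h \<open>x < n\<close> obtain m where "n = x + h + (2 * x + 1) * m"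
      by (blast elim: target_decomposition)
    with h that show thesis
      by (auto elim!: dvdE simp: mult.commute)
  qed
  have "act (replicate m Sm @ replicate k Gm @ replicate (h - 1) Sm) (1, 1)
      = (int n, int (n - x))"
    unfolding act_SGS_base[OF \<open>h > 0\<close>] using hkm by (simp add: algebra_simps)
  then show ?thesis
    by (rule F_eq_1_if_reachable)
qed

end
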